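(* For all integers $1\le k\le n$, \[ \mathbb{P}_n(S_k)=\frac{1}{2}\left(1-\frac{k-1}{n}\right), \] i.e. the probability that the $k$-th boundary step of a uniformly random type-B permutation tableau of size $n$ is a south step equals $\frac12\bigl(1-\frac{k-1}{n}\bigr)$.
   Context: A Ferrers diagram is a left-justified array of cells whose row lengths weakly decrease from top to bottom (rows of length $0$ are allowed). Its half-perimeter is the number of rows plus the number of columns. Its southeast boundary, traversed from the northeast corner to the southwest corner, consists of $n$ unit steps, each south or west; south steps correspond to rows and west steps to columns. We write $S_k$ (resp. $W_k$) for the event that the $k$-th step is south (resp. west). If the diagram has $c$ columns, the shifted Ferrers diagram is obtained by inserting $c$ new left-justified rows above it, of lengths $c,c-1,\dots,1$ from top to bottom; the rightmost cell of each inserted row is a diagonal cell. A type-B permutation tableau of size $n$ is a filling of a shifted Ferrers diagram of half-perimeter $n$ with $0$'s and $1$'s such that: (1) every column contains at least one $1$; (2) no $0$ has both a $1$ above it in its column and a $1$ to its left in its row; (3) if a diagonal cell contains $0$ then every cell of its row contains $0$. The boundary steps of the shifted diagram are those of the underlying Ferrers diagram. Let $\mathcal{B}_n$ be the set of such tableaux, and $\mathbb{P}_n$ the uniform probability measure on $\mathcal{B}_n$. *)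

theory Defs
  imports Complex_Main
begin

text \<open>Boundary word of a Ferrers diagram of half-perimeter n: a list w of length n,
  traversed from the NE corner to the SW corner; True = south step (a row),
  False = west step (a column).  Step k (1-based) is w ! (k-1).\<close>

definition ncols :: "bool list \<Rightarrow> nat" where
  "ncols w = length (filter Not w)"

definition ferrers_rowlens :: "bool list \<Rightarrow> nat list" where
  "ferrers_rowlens w =
     map (\<lambda>i. length (filter Not (drop (Suc i) w))) (filter (\<lambda>i. w ! i) [0..<length w])"

definition shifted_rowlens :: "bool list \<Rightarrow> nat list" where
  "shifted_rowlens w = map (\<lambda>i. Suc i) [0..<ncols w] @ ferrers_rowlens w"

text \<open>Cells (i,j): row i from the top, column j from the left, both 0-based.\<close>
definition shifted_cells :: "bool list \<Rightarrow> (nat \<times> nat) set" where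
  "shifted_cells w = {(i, j). i < length (shifted_rowlens w) \<and> j < shifted_rowlens w ! i}"

text \<open>A filling is given by the set Ones of cells containing 1 (all other cells contain 0).
  The diagonal cell of inserted row i (i < c) is its rightmost cell (i, i).\<close>
definition is_typeB_tableau :: "bool list \<Rightarrow> (nat \<times> nat) set \<Rightarrow> bool" where
  "is_typeB_tableau w Ones \<longleftrightarrow>
     Ones \<subseteq> shifted_cells w \<and>
     (\<forall>j < ncols w. \<exists>i. (i, j) \<in> Ones) \<and>
     (\<forall>i j. (i, j) \<in> shifted_cells w \<and> (i, j) \<notin> Ones \<longrightarrow>
            \<not> ((\<exists>i' < i. (i', j) \<in> Ones) \<and> (\<exists>j' < j. (i, j') \<in> Ones))) \<and>
     (\<forall>i < ncols w. (i, i) \<notin> Ones \<longrightarrow> (\<forall>j. (i, j) \<notin> Ones))"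

definition typeB_tableaux :: "nat \<Rightarrow> (bool list \<times> (nat \<times> nat) set) set" where
  "typeB_tableaux n = {(w, Ones). length w = n \<and> is_typeB_tableau w Ones}"

definition prob_S :: "nat \<Rightarrow> nat \<Rightarrow> real" where
  "prob_S n k = real (card {T \<in> typeB_tableaux n. fst T ! (k - 1)}) / real (card (typeB_tableaux n))"

end

theory Submission
  imports Defs
begin

text \<open>Let t(w) be the number of type-B tableaux with boundary word w (S = south, W = west).
  Three local rules hold: a final south step is an empty row, so t(uS) = t(u); an initial west
  step gives a column consisting of a single diagonal cell, which must contain 1, so
  t(Wv) = t(Sv); and splitting on the corner cell of a factor SW gives the PASEP-type relation
  t(uSWv) = t(uWSv) + t(uWv) + t(uSv).  Let Z_n = |B_n| and let N(a, b) count the tableaux of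
  size a + b + 1 whose step a + 1 is south.  Summing the rules over all words gives
  N(a, 0) = Z_a and N(a, b + 1) = N(a + 1, b) + Z_(a+b+1), hence N(m - j, j) = (j + 1) Z_m,
  and Z_(m+1) = 2 N(0, m) = 2 (m + 1) Z_m.  Therefore
  P_n(S_k) = N(k - 1, n - k) / Z_n = (n - k + 1) / (2 n).\<close>

lemma ncols_Nil [simp]: "ncols [] = 0"
  by (simp add: ncols_def)

lemma ncols_Cons [simp]: "ncols (b # w) = (if b then ncols w else Suc (ncols w))"
  by (simp add: ncols_def)

lemma ncols_append [simp]: "ncols (u @ v) = ncols u + ncols v"
  by (simp add: ncols_def)

lemma ferrers_rowlens_Nil [simp]: "ferrers_rowlens [] = []"
  by (simp add: ferrers_rowlens_def)

lemma ferrers_rowlens_Cons [simp]: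
  "ferrers_rowlens (b # w) = (if b then [ncols w] else []) @ ferrers_rowlens w"
proof -
  have "[0..<Suc (length w)] = 0 # map Suc [0..<length w]"
    by (simp only: map_Suc_upt upt_conv_Cons[OF zero_less_Suc])
  then show ?thesis
    unfolding ferrers_rowlens_def length_Cons
    by (simp add: filter_map comp_def ncols_def del: upt_Suc)
qed

lemma ferrers_rowlens_append [simp]:
  "ferrers_rowlens (u @ v) = map (\<lambda>x. x + ncols v) (ferrers_rowlens u) @ ferrers_rowlens v"
  by (induction u) auto

lemma ferrers_rowlens_le_ncols: "x \<in> set (ferrers_rowlens w) \<Longrightarrow> x \<le> ncols w"
  by (induction w) (auto split: if_splits)

lemma shifted_rowlens_eq: "shifted_rowlens w = map Suc [0..<ncols w] @ ferrers_rowlens w"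
  by (simp add: shifted_rowlens_def)

section \<open>Fillings of sets of cells\<close>

definition cells_of :: "nat list \<Rightarrow> (nat \<times> nat) set" where
  "cells_of l = {(i, j). i < length l \<and> j < l ! i}"

lemma finite_cells_of: "finite (cells_of l)"
proof (rule finite_subset)
  show "cells_of l \<subseteq> {..<length l} \<times> {..<sum_list l}"
    by (auto simp: cells_of_def intro: order.strict_trans2 elem_le_sum_list)
qed simp

definition Le_condition :: "(nat \<times> nat) set \<Rightarrow> (nat \<times> nat) set \<Rightarrow> bool" where
  "Le_condition C Q \<longleftrightarrow> (\<forall>i j. (i, j) \<in> C \<and> (i, j) \<notin> Q \<longrightarrow>
     \<not> ((\<exists>i' < i. (i', j) \<in> Q) \<and> (\<exists>j' < j. (i, j') \<in> Q)))"

text \<open>Deleting a row or a column of a shifted diagram does not in general leave a shifted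
  diagram, so tableaux are generalised to fillings of an arbitrary cell set C, in which the
  columns in K must contain a 1 and the rows i in D have the diagonal cell (i, i).\<close>

definition is_filling ::
    "(nat \<times> nat) set \<Rightarrow> nat set \<Rightarrow> nat set \<Rightarrow> (nat \<times> nat) set \<Rightarrow> bool" where
  "is_filling C K D Q \<longleftrightarrow> Q \<subseteq> C \<and> (\<forall>j\<in>K. \<exists>i. (i, j) \<in> Q) \<and> Le_condition C Q \<and>
     (\<forall>i\<in>D. (i, i) \<notin> Q \<longrightarrow> (\<forall>j. (i, j) \<notin> Q))"

lemma is_typeB_tableau_iff_is_filling:
  "is_typeB_tableau w Q \<longleftrightarrow>
     is_filling (cells_of (shifted_rowlens w)) {..<ncols w} {..<ncols w} Q"
  unfolding is_typeB_tableau_def is_filling_def Le_condition_def shifted_cells_def cells_of_def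
  by auto

lemma finite_fillings: "finite C \<Longrightarrow> finite {Q. is_filling C K D Q}"
  by (rule finite_subset[of _ "Pow C"]) (auto simp: is_filling_def)

lemma Le_condition_image_iff:
  fixes f g :: "nat \<Rightarrow> nat"
  assumes sf: "strict_mono f" and sg: "strict_mono g"
    and cells: "\<And>i j. (i, j) \<in> C' \<longleftrightarrow> (f i, g j) \<in> C"
  shows "Le_condition C (map_prod f g ` Q') \<longleftrightarrow> Le_condition C' Q'"
proof -
  let ?Q = "map_prod f g ` Q'"
  have mem: "(f a, g b) \<in> ?Q \<longleftrightarrow> (a, b) \<in> Q'" for a b
    using strict_mono_eq[OF sf] strict_mono_eq[OF sg] by auto
  have lf: "f a < f b \<longleftrightarrow> a < b" for a b using sf by (simp add: strict_mono_less)
  have lg: "g a < g b \<longleftrightarrow> a < b" for a b using sg by (simp add: strict_mono_less)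
  show ?thesis
  proof
    assume r: "Le_condition C ?Q"
    show "Le_condition C' Q'"
      unfolding Le_condition_def
    proof (intro allI impI notI)
      fix i j
      assume a: "(i, j) \<in> C' \<and> (i, j) \<notin> Q'"
        and "(\<exists>i'<i. (i', j) \<in> Q') \<and> (\<exists>j'<j. (i, j') \<in> Q')"
      then have "(\<exists>i''<f i. (i'', g j) \<in> ?Q) \<and> (\<exists>j''<g j. (f i, j'') \<in> ?Q)"
        using lf lg mem by blast
      moreover have "(f i, g j) \<in> C" "(f i, g j) \<notin> ?Q" using a cells mem by auto
      ultimately show False
        using r[unfolded Le_condition_def, rule_format, of "f i" "g j"] by argo
    qed
  next
    assume r: "Le_condition C' Q'"
    show "Le_condition C ?Q"
      unfolding Le_condition_def
    proof (intro allI impI notI)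
      fix x y
      assume a: "(x, y) \<in> C \<and> (x, y) \<notin> ?Q"
        and "(\<exists>i'<x. (i', y) \<in> ?Q) \<and> (\<exists>j'<y. (x, j') \<in> ?Q)"
      then obtain a0 b0 a1 b1 where
        "f a0 < x" "y = g b0" "(a0, b0) \<in> Q'" "x = f a1" "g b1 < y" "(a1, b1) \<in> Q'"
        by auto
      moreover from this have "(a1, b0) \<in> C'" "(a1, b0) \<notin> Q'" "a0 < a1" "b1 < b0"
        using a cells mem lf lg by auto
      ultimately show False
        using r[unfolded Le_condition_def, rule_format, of a1 b0] by blast
    qed
  qed
qed

text \<open>The diagonal rows must correspond exactly under f and stay diagonal, whence the
  hypotheses on D.\<close>

lemma is_filling_image_iff:
  fixes f g :: "nat \<Rightarrow> nat"
  assumes sf: "strict_mono f" and sg: "strict_mono g"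
    and cells: "\<And>i j. (i, j) \<in> C' \<longleftrightarrow> (f i, g j) \<in> C"
    and K: "K = g ` K'"
    and D: "D \<inter> range f = f ` D'" and fg: "\<And>i. i \<in> D' \<Longrightarrow> g i = f i"
  shows "is_filling C K D (map_prod f g ` Q') \<longleftrightarrow> is_filling C' K' D' Q'"
proof -
  let ?Q = "map_prod f g ` Q'"
  have injf: "inj f" and injg: "inj g"
    using sf sg strict_mono_imp_inj_on by blast+
  have mem: "(f a, g b) \<in> ?Q \<longleftrightarrow> (a, b) \<in> Q'" for a b
    using injf injg by (auto simp: inj_eq)
  have subset: "?Q \<subseteq> C \<longleftrightarrow> Q' \<subseteq> C'"
    using cells by auto
  have "(\<exists>i. (i, g b) \<in> ?Q) \<longleftrightarrow> (\<exists>a. (a, b) \<in> Q')" for b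
    using mem injg by (auto simp: inj_eq)
  then have columns: "(\<forall>j\<in>K. \<exists>i. (i, j) \<in> ?Q) \<longleftrightarrow> (\<forall>j\<in>K'. \<exists>i. (i, j) \<in> Q')"
    unfolding K by simp
  have diagonal: "(\<forall>i\<in>D. (i, i) \<notin> ?Q \<longrightarrow> (\<forall>j. (i, j) \<notin> ?Q)) \<longleftrightarrow>
      (\<forall>i\<in>D'. (i, i) \<notin> Q' \<longrightarrow> (\<forall>j. (i, j) \<notin> Q'))"
  proof
    assume r: "\<forall>i\<in>D. (i, i) \<notin> ?Q \<longrightarrow> (\<forall>j. (i, j) \<notin> ?Q)"
    show "\<forall>i\<in>D'. (i, i) \<notin> Q' \<longrightarrow> (\<forall>j. (i, j) \<notin> Q')"
    proof (intro ballI impI allI)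
      fix i j assume i: "i \<in> D'" and "(i, i) \<notin> Q'"
      then have "f i \<in> D" "(f i, f i) \<notin> ?Q" using D mem fg[OF i] by (blast, metis)
      then have "(f i, g j) \<notin> ?Q" using r by meson
      then show "(i, j) \<notin> Q'" using mem by blast
    qed
  next
    assume r: "\<forall>i\<in>D'. (i, i) \<notin> Q' \<longrightarrow> (\<forall>j. (i, j) \<notin> Q')"
    show "\<forall>i\<in>D. (i, i) \<notin> ?Q \<longrightarrow> (\<forall>j. (i, j) \<notin> ?Q)"
    proof (intro ballI impI allI notI)
      fix x y assume x: "x \<in> D" and n: "(x, x) \<notin> ?Q" and "(x, y) \<in> ?Q"
      then obtain i b where ib: "x = f i" "y = g b" "(i, b) \<in> Q'" by blast
      then have "x \<in> f ` D'" using x D by blast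
      then have i: "i \<in> D'" using ib(1) injf by (auto simp: inj_eq)
      then have "(i, i) \<notin> Q'" using n ib(1) mem fg[OF i] by metis
      then show False using r i ib(3) by blast
    qed
  qed
  show ?thesis
    unfolding is_filling_def subset columns diagonal Le_condition_image_iff[OF sf sg cells] ..
qed

lemma card_fillings_in_image:
  fixes f g :: "nat \<Rightarrow> nat"
  assumes sf: "strict_mono f" and sg: "strict_mono g"
    and "\<And>i j. (i, j) \<in> C' \<longleftrightarrow> (f i, g j) \<in> C"
    and "K = g ` K'"
    and "D \<inter> range f = f ` D'" and "\<And>i. i \<in> D' \<Longrightarrow> g i = f i"
  shows "card {Q. is_filling C K D Q \<and> Q \<subseteq> range (map_prod f g)} =
    card {Q'. is_filling C' K' D' Q'}"
proof -
  let ?h = "map_prod f g"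
  have "inj f" "inj g" using sf sg strict_mono_imp_inj_on by blast+
  then have injh: "inj ?h" using map_prod_inj_on[of f UNIV g UNIV] by simp
  have "bij_betw (image ?h) {Q'. is_filling C' K' D' Q'}
      {Q. is_filling C K D Q \<and> Q \<subseteq> range ?h}"
  proof (rule bij_betwI')
    show "(?h ` x = ?h ` y) = (x = y)" for x y
      using injh by (simp add: inj_image_eq_iff)
    show "?h ` x \<in> {Q. is_filling C K D Q \<and> Q \<subseteq> range ?h}"
      if "x \<in> {Q'. is_filling C' K' D' Q'}" for x
      using that is_filling_image_iff[OF assms] by blast
    show "\<exists>x\<in>{Q'. is_filling C' K' D' Q'}. y = ?h ` x"
      if "y \<in> {Q. is_filling C K D Q \<and> Q \<subseteq> range ?h}" for y
    proof
      have "y = ?h ` (?h -` y)" using that by (simp add: image_vimage_eq Int_absorb2)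
      then show "y = ?h ` (?h -` y)" "?h -` y \<in> {Q'. is_filling C' K' D' Q'}"
        using that is_filling_image_iff[OF assms, of "?h -` y"] by auto
    qed
  qed
  then show ?thesis by (simp add: bij_betw_same_card)
qed

section \<open>Removing a corner cell\<close>

lemma card_split_by:
  assumes "finite S"
  shows "card S = card {x \<in> S. P x} + card {x \<in> S. \<not> P x}"
proof -
  have "S = {x \<in> S. P x} \<union> {x \<in> S. \<not> P x}" by blast
  then show ?thesis
    using assms by (metis (no_types, lifting) card_Un_disjoint disjoint_iff finite_Un mem_Collect_eq)
qed

lemma card_image_insert:
  assumes "\<And>A. A \<in> S \<Longrightarrow> x \<notin> A"
  shows "card (insert x ` S) = card S"
proof (rule card_image)
  show "inj_on (insert x) S"
    using assms by (metis inj_onI insert_ident)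
qed

lemma Le_condition_insert_corner:
  assumes "(R, p) \<notin> Q"
    and colp: "\<And>i. (i, p) \<in> C \<Longrightarrow> i < R" and rowR: "\<And>j. (R, j) \<in> C \<Longrightarrow> j < p"
  shows "Le_condition (insert (R, p) C) (insert (R, p) Q) \<longleftrightarrow> Le_condition C Q"
proof
  assume r: "Le_condition (insert (R, p) C) (insert (R, p) Q)"
  show "Le_condition C Q" unfolding Le_condition_def
  proof (intro allI impI notI)
    fix i j assume a: "(i, j) \<in> C \<and> (i, j) \<notin> Q"
      and b: "(\<exists>i'<i. (i', j) \<in> Q) \<and> (\<exists>j'<j. (i, j') \<in> Q)"
    have "(i, j) \<noteq> (R, p)" using a colp by blast
    then have "(i, j) \<in> insert (R, p) C \<and> (i, j) \<notin> insert (R, p) Q" using a by simp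
    moreover have "(\<exists>i'<i. (i', j) \<in> insert (R, p) Q) \<and> (\<exists>j'<j. (i, j') \<in> insert (R, p) Q)"
      using b by blast
    ultimately show False using r[unfolded Le_condition_def, rule_format, of i j] by argo
  qed
next
  assume r: "Le_condition C Q"
  show "Le_condition (insert (R, p) C) (insert (R, p) Q)" unfolding Le_condition_def
  proof (intro allI impI notI)
    fix i j assume a: "(i, j) \<in> insert (R, p) C \<and> (i, j) \<notin> insert (R, p) Q"
      and "(\<exists>i'<i. (i', j) \<in> insert (R, p) Q) \<and> (\<exists>j'<j. (i, j') \<in> insert (R, p) Q)"
    then obtain i' j' where i'j': "i' < i" "(i', j) \<in> insert (R, p) Q"
      "j' < j" "(i, j') \<in> insert (R, p) Q"
      by blast
    have ij: "(i, j) \<in> C" "(i, j) \<notin> Q" using a by auto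
    have "(i', j) \<noteq> (R, p)" using colp ij(1) i'j'(1) by fastforce
    moreover have "(i, j') \<noteq> (R, p)" using rowR ij(1) i'j'(3) by fastforce
    ultimately have "(i', j) \<in> Q" "(i, j') \<in> Q" using i'j' by auto
    then show False using r[unfolded Le_condition_def, rule_format, of i j] ij i'j' by blast
  qed
qed

text \<open>A 1 in a corner cell (R, p) is never an obstruction in the Le-condition, and it meets
  the column condition for p and the diagonal condition for R.\<close>

lemma fillings_containing_corner:
  assumes C: "C' = insert (R, p) C" and nx: "(R, p) \<notin> C"
    and colp: "\<And>i. (i, p) \<in> C \<Longrightarrow> i < R" and rowR: "\<And>j. (R, j) \<in> C \<Longrightarrow> j < p"
    and RD: "R \<in> D \<Longrightarrow> R = p"
  shows "{Q. is_filling C' K D Q \<and> (R, p) \<in> Q} =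
    insert (R, p) ` {Q. is_filling C (K - {p}) (D - {R}) Q}"
proof (intro set_eqI iffI)
  fix Q assume "Q \<in> {Q. is_filling C' K D Q \<and> (R, p) \<in> Q}"
  then have v: "is_filling C' K D Q" and x: "(R, p) \<in> Q" by auto
  let ?Q0 = "Q - {(R, p)}"
  have Q: "Q = insert (R, p) ?Q0" using x by blast
  have "Le_condition C' Q" using v unfolding is_filling_def by blast
  then have "Le_condition C ?Q0"
    using Le_condition_insert_corner[OF _ colp rowR, of ?Q0] C Q by auto
  moreover have "?Q0 \<subseteq> C" using v C unfolding is_filling_def by blast
  moreover have "\<forall>j\<in>K - {p}. \<exists>i. (i, j) \<in> ?Q0" using v unfolding is_filling_def by blast
  moreover have "\<forall>i\<in>D - {R}. (i, i) \<notin> ?Q0 \<longrightarrow> (\<forall>j. (i, j) \<notin> ?Q0)"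
    using v unfolding is_filling_def by blast
  ultimately have "is_filling C (K - {p}) (D - {R}) ?Q0"
    unfolding is_filling_def by blast
  then show "Q \<in> insert (R, p) ` {Q. is_filling C (K - {p}) (D - {R}) Q}"
    using Q by blast
next
  fix Q assume "Q \<in> insert (R, p) ` {Q. is_filling C (K - {p}) (D - {R}) Q}"
  then obtain Q0 where Q: "Q = insert (R, p) Q0" and v: "is_filling C (K - {p}) (D - {R}) Q0"
    by blast
  have "(R, p) \<notin> Q0" using v nx unfolding is_filling_def by blast
  moreover have "Le_condition C Q0" using v unfolding is_filling_def by blast
  ultimately have "Le_condition C' Q"
    using Le_condition_insert_corner[OF _ colp rowR] C Q by blast
  moreover have "Q \<subseteq> C'" using v C Q unfolding is_filling_def by blast
  moreover have "\<forall>j\<in>K. \<exists>i. (i, j) \<in> Q" using v Q unfolding is_filling_def by blast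
  moreover have "\<forall>i\<in>D. (i, i) \<notin> Q \<longrightarrow> (\<forall>j. (i, j) \<notin> Q)"
    using v RD Q unfolding is_filling_def by blast
  ultimately show "Q \<in> {Q. is_filling C' K D Q \<and> (R, p) \<in> Q}"
    using Q unfolding is_filling_def by blast
qed

lemma card_fillings_remove_corner:
  assumes C: "C' = insert (R, p) C" and nx: "(R, p) \<notin> C"
    and colp: "\<And>i. (i, p) \<in> C \<Longrightarrow> i < R" and rowR: "\<And>j. (R, j) \<in> C \<Longrightarrow> j < p"
    and pK: "p \<in> K" and RD: "R \<notin> D" and fin: "finite C'"
  shows "card {Q. is_filling C' K D Q} =
    card {Q. is_filling C K D Q \<and> (\<forall>j. (R, j) \<notin> Q)} + card {Q. is_filling C (K - {p}) D Q}"
proof -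
  have without: "{Q \<in> {Q. is_filling C' K D Q}. (R, p) \<notin> Q} =
      {Q. is_filling C K D Q \<and> (\<forall>j. (R, j) \<notin> Q)}"
  proof (intro set_eqI iffI)
    fix Q assume "Q \<in> {Q \<in> {Q. is_filling C' K D Q}. (R, p) \<notin> Q}"
    then have v: "is_filling C' K D Q" and nq: "(R, p) \<notin> Q" by auto
    have sub: "Q \<subseteq> C" using v nq C unfolding is_filling_def by blast
    have Le: "Le_condition C' Q" using v unfolding is_filling_def by blast
    obtain i where "(i, p) \<in> Q" using v pK unfolding is_filling_def by blast
    moreover from this have "i < R" using colp sub by blast
    ultimately have "\<not> (\<exists>j'<p. (R, j') \<in> Q)"
      using Le[unfolded Le_condition_def, rule_format, of R p] nq C by blast
    then have "\<forall>j. (R, j) \<notin> Q" using rowR sub by blast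
    moreover have "Le_condition C Q" using Le C unfolding Le_condition_def by blast
    ultimately show "Q \<in> {Q. is_filling C K D Q \<and> (\<forall>j. (R, j) \<notin> Q)}"
      using v sub unfolding is_filling_def by blast
  next
    fix Q assume "Q \<in> {Q. is_filling C K D Q \<and> (\<forall>j. (R, j) \<notin> Q)}"
    then have v: "is_filling C K D Q" and row: "\<forall>j. (R, j) \<notin> Q" by auto
    have "Le_condition C' Q" using v row C unfolding is_filling_def Le_condition_def by blast
    then show "Q \<in> {Q \<in> {Q. is_filling C' K D Q}. (R, p) \<notin> Q}"
      using v row C unfolding is_filling_def by blast
  qed
  have "{Q \<in> {Q. is_filling C' K D Q}. (R, p) \<in> Q} =
      insert (R, p) ` {Q. is_filling C (K - {p}) D Q}"
    using fillings_containing_corner[OF C nx colp rowR, of D K] RD by simp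
  moreover have "card (insert (R, p) ` {Q. is_filling C (K - {p}) D Q}) =
      card {Q. is_filling C (K - {p}) D Q}"
    using nx by (intro card_image_insert) (auto simp: is_filling_def)
  ultimately show ?thesis
    using card_split_by[OF finite_fillings[OF fin], where P = "\<lambda>Q. (R, p) \<notin> Q"] without by simp
qed

lemma card_fillings_remove_diagonal_corner:
  assumes C: "C' = insert (c, c) C"
    and ncol: "\<And>i. (i, c) \<notin> C" and rowR: "\<And>j. (c, j) \<in> C \<Longrightarrow> j < c"
  shows "card {Q. is_filling C' {..<Suc c} {..<Suc c} Q} = card {Q. is_filling C {..<c} {..<c} Q}"
proof -
  have "(c, c) \<in> Q" if v: "is_filling C' {..<Suc c} {..<Suc c} Q" for Q
  proof -
    have "c \<in> {..<Suc c}" by simp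
    then obtain i where "(i, c) \<in> Q" using v unfolding is_filling_def by blast
    moreover have "Q \<subseteq> C'" using v unfolding is_filling_def by blast
    ultimately show ?thesis using C ncol by blast
  qed
  then have "{Q. is_filling C' {..<Suc c} {..<Suc c} Q} =
      {Q. is_filling C' {..<Suc c} {..<Suc c} Q \<and> (c, c) \<in> Q}"
    by blast
  also have "\<dots> = insert (c, c) ` {Q. is_filling C ({..<Suc c} - {c}) ({..<Suc c} - {c}) Q}"
    using ncol rowR by (intro fillings_containing_corner[OF C]) auto
  also have "{..<Suc c} - {c} = {..<c}" by auto
  finally have "{Q. is_filling C' {..<Suc c} {..<Suc c} Q} =
      insert (c, c) ` {Q. is_filling C {..<c} {..<c} Q}" .
  moreover have "(c, c) \<notin> Q" if "is_filling C {..<c} {..<c} Q" for Q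
    using that ncol unfolding is_filling_def by blast
  ultimately show ?thesis using card_image_insert by (metis mem_Collect_eq)
qed

lemma card_fillings_relax_column:
  assumes fin: "finite C" and pK: "p \<in> K"
  shows "card {Q. is_filling C (K - {p}) D Q} =
    card {Q. is_filling C K D Q} + card {Q. is_filling C (K - {p}) D Q \<and> (\<forall>i. (i, p) \<notin> Q)}"
proof -
  have "is_filling C K D Q \<longleftrightarrow> is_filling C (K - {p}) D Q \<and> (\<exists>i. (i, p) \<in> Q)" for Q
    using pK unfolding is_filling_def by blast
  then show ?thesis
    using card_split_by[OF finite_fillings[OF fin], where P = "\<lambda>Q. \<exists>i. (i, p) \<in> Q"]
    by simp
qed

section \<open>Deleting a row or a diagonal\<close>

definition shift_at :: "nat \<Rightarrow> nat \<Rightarrow> nat" where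
  "shift_at p i = (if i < p then i else Suc i)"

lemma strict_mono_shift_at: "strict_mono (shift_at p)"
  by (auto simp: strict_mono_def shift_at_def)

lemma range_shift_at: "range (shift_at p) = - {p}"
proof (intro set_eqI iffI)
  fix x assume "x \<in> - {p}"
  then have "shift_at p (if x < p then x else x - 1) = x" by (auto simp: shift_at_def)
  then show "x \<in> range (shift_at p)" by (metis rangeI)
qed (auto simp: shift_at_def)

lemma shift_at_image_below: "D \<subseteq> {..<p} \<Longrightarrow> shift_at p ` D = D"
  by (force simp: shift_at_def)

lemma shift_at_image_lessThan: "p \<le> d \<Longrightarrow> shift_at p ` {..<d} = {..<Suc d} - {p}"
proof (intro set_eqI iffI)
  fix x assume "p \<le> d" "x \<in> {..<Suc d} - {p}"
  then have "shift_at p (if x < p then x else x - 1) = x" "(if x < p then x else x - 1) < d"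
    by (auto simp: shift_at_def)
  then show "x \<in> shift_at p ` {..<d}" by (metis imageI lessThan_iff)
qed (auto simp: shift_at_def)

lemma range_map_prod: "range (map_prod f g) = range f \<times> range g"
  using map_prod_surj_on[of f UNIV "range f" g UNIV "range g"] by simp

lemma column_notin_cells_of:
  assumes "\<forall>x\<in>set L. x \<le> j"
  shows "(i, j) \<notin> cells_of L"
proof
  assume "(i, j) \<in> cells_of L"
  then have "i < length L" "j < L ! i" by (auto simp: cells_of_def)
  then show False using assms nth_mem by (metis leD)
qed

lemma cells_of_Suc_row:
  "cells_of (A @ Suc p # B) = insert (length A, p) (cells_of (A @ p # B))"
  by (auto simp: cells_of_def nth_append nth_Cons' less_Suc_eq split: if_splits)

lemma cells_of_delete_row:
  "(i, j) \<in> cells_of (A @ B) \<longleftrightarrow> (shift_at (length A) i, j) \<in> cells_of (A @ x # B)"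
  by (auto simp: cells_of_def shift_at_def nth_append)

text \<open>M' arises from the row lengths M by adding a cell in column p to some rows: rows longer
  than p must get it, rows shorter than p cannot, rows of length p may or may not.\<close>

definition column_added :: "nat \<Rightarrow> nat list \<Rightarrow> nat list \<Rightarrow> bool" where
  "column_added p M' M \<longleftrightarrow> list_all2 (\<lambda>l' l. p \<le> l \<and> l' = Suc l \<or> l \<le> p \<and> l' = l) M' M"

lemma cells_of_delete_diagonal:
  assumes "p \<le> d" and "column_added p M' M"
  shows "(i, j) \<in> cells_of (map Suc [0..<d] @ M) \<longleftrightarrow>
    (shift_at p i, shift_at p j) \<in> cells_of (map Suc [0..<Suc d] @ M')"
proof (cases "i < d")
  case True
  then have "shift_at p i < Suc d" "j < Suc i \<longleftrightarrow> shift_at p j < Suc (shift_at p i)"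
    by (auto simp: shift_at_def)
  then show ?thesis using True by (simp add: cells_of_def nth_append del: upt_Suc)
next
  case False
  then have i: "shift_at p i = Suc i" using assms(1) by (simp add: shift_at_def)
  have len: "length M' = length M"
    using assms(2) by (simp add: column_added_def list_all2_lengthD)
  have "j < M ! (i - d) \<longleftrightarrow> shift_at p j < M' ! (i - d)" if "i - d < length M"
    using assms(2) that by (auto simp: column_added_def list_all2_conv_all_nth shift_at_def)
  then show ?thesis using False len by (auto simp: cells_of_def nth_append i del: upt_Suc)
qed

lemma card_fillings_delete_empty_row:
  assumes K: "K \<subseteq> {..<length A}" and D: "D \<subseteq> {..<length A}"
  shows "card {Q. is_filling (cells_of (A @ x # B)) K D Q \<and> (\<forall>j. (length A, j) \<notin> Q)} =
    card {Q. is_filling (cells_of (A @ B)) K D Q}"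
proof -
  let ?f = "shift_at (length A)"
  have "range (map_prod ?f id) = (- {length A}) \<times> UNIV"
    by (simp add: range_map_prod range_shift_at)
  then have "{Q. is_filling (cells_of (A @ x # B)) K D Q \<and> (\<forall>j. (length A, j) \<notin> Q)} =
      {Q. is_filling (cells_of (A @ x # B)) K D Q \<and> Q \<subseteq> range (map_prod ?f id)}"
    by auto
  also have "card \<dots> = card {Q. is_filling (cells_of (A @ B)) K D Q}"
  proof (rule card_fillings_in_image[OF strict_mono_shift_at strict_mono_id])
    show "(i, j) \<in> cells_of (A @ B) \<longleftrightarrow> (?f i, id j) \<in> cells_of (A @ x # B)" for i j
      unfolding id_def by (rule cells_of_delete_row)
    show "K = id ` K" by simp
    show "D \<inter> range ?f = ?f ` D"
      using D by (auto simp: shift_at_image_below range_shift_at)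
    show "i \<in> D \<Longrightarrow> id i = ?f i" for i using D by (auto simp: shift_at_def)
  qed
  finally show ?thesis .
qed

lemma card_fillings_delete_diagonal:
  assumes pd: "p \<le> d" and M: "column_added p M' M"
  shows "card {Q. is_filling (cells_of (map Suc [0..<Suc d] @ M')) ({..<Suc d} - {p}) {..<Suc d} Q
      \<and> (\<forall>i. (i, p) \<notin> Q)} =
    card {Q. is_filling (cells_of (map Suc [0..<d] @ M)) {..<d} {..<d} Q}"
proof -
  let ?C = "cells_of (map Suc [0..<Suc d] @ M')"
  let ?h = "map_prod (shift_at p) (shift_at p)"
  have "is_filling ?C ({..<Suc d} - {p}) {..<Suc d} Q \<and> (\<forall>i. (i, p) \<notin> Q) \<longleftrightarrow>
      is_filling ?C ({..<Suc d} - {p}) {..<Suc d} Q \<and> Q \<subseteq> range ?h" for Q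
  proof -
    have "range ?h = (- {p}) \<times> (- {p})"
      by (simp add: range_map_prod range_shift_at)
    moreover have "\<forall>j. (p, j) \<notin> Q" if "is_filling ?C ({..<Suc d} - {p}) {..<Suc d} Q"
      and "\<forall>i. (i, p) \<notin> Q"
      using that pd unfolding is_filling_def by auto
    ultimately show ?thesis by auto
  qed
  then have "{Q. is_filling ?C ({..<Suc d} - {p}) {..<Suc d} Q \<and> (\<forall>i. (i, p) \<notin> Q)} =
      {Q. is_filling ?C ({..<Suc d} - {p}) {..<Suc d} Q \<and> Q \<subseteq> range ?h}"
    by blast
  also have "card \<dots> = card {Q. is_filling (cells_of (map Suc [0..<d] @ M)) {..<d} {..<d} Q}"
  proof (rule card_fillings_in_image[OF strict_mono_shift_at strict_mono_shift_at])
    show "(i, j) \<in> cells_of (map Suc [0..<d] @ M) \<longleftrightarrow> (shift_at p i, shift_at p j) \<in> ?C" for i j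
      using cells_of_delete_diagonal[OF pd M] .
    show "{..<Suc d} - {p} = shift_at p ` {..<d}"
      using shift_at_image_lessThan[OF pd] by simp
    show "{..<Suc d} \<inter> range (shift_at p) = shift_at p ` {..<d}"
      using shift_at_image_lessThan[OF pd] by (auto simp: range_shift_at)
  qed simp
  finally show ?thesis .
qed

lemma card_fillings_Suc_row:
  assumes B: "\<forall>x\<in>set B. x \<le> p" and pK: "p \<in> K"
    and K: "K \<subseteq> {..<length A}" and D: "D \<subseteq> {..<length A}"
  shows "card {Q. is_filling (cells_of (A @ Suc p # B)) K D Q} =
    card {Q. is_filling (cells_of (A @ B)) K D Q} +
    card {Q. is_filling (cells_of (A @ p # B)) (K - {p}) D Q}"
proof -
  have colp: "i < length A" if "(i, p) \<in> cells_of (A @ p # B)" for i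
  proof (rule ccontr)
    assume "\<not> i < length A"
    then have i: "i - length A < length (p # B)" "p < (p # B) ! (i - length A)"
      using that by (auto simp: cells_of_def nth_append)
    have "(p # B) ! (i - length A) \<in> set (p # B)" using i(1) by (rule nth_mem)
    then show False using i(2) B by auto
  qed
  have rowR: "(length A, j) \<in> cells_of (A @ p # B) \<Longrightarrow> j < p" for j
    by (simp add: cells_of_def)
  have nx: "(length A, p) \<notin> cells_of (A @ p # B)" by (simp add: cells_of_def)
  have "length A \<notin> D" using D by auto
  from card_fillings_remove_corner[OF cells_of_Suc_row nx colp rowR pK this finite_cells_of]
  show ?thesis by (simp only: card_fillings_delete_empty_row[OF K D])
qed

section \<open>Local relations between boundary words\<close>

definition num_tableaux :: "bool list \<Rightarrow> nat" where
  "num_tableaux w = card {Q. is_typeB_tableau w Q}"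

lemma num_tableaux_eq_card_fillings:
  "num_tableaux w =
    card {Q. is_filling (cells_of (shifted_rowlens w)) {..<ncols w} {..<ncols w} Q}"
  unfolding num_tableaux_def is_typeB_tableau_iff_is_filling ..

lemma num_tableaux_Nil: "num_tableaux [] = 1"
proof -
  have "{Q. is_filling {} {} {} Q} = {{}}" by (auto simp: is_filling_def Le_condition_def)
  then show ?thesis by (simp add: num_tableaux_eq_card_fillings shifted_rowlens_eq cells_of_def)
qed

lemma num_tableaux_append_south: "num_tableaux (u @ [True]) = num_tableaux u"
proof -
  have "shifted_rowlens (u @ [True]) = shifted_rowlens u @ [0]"
    by (simp add: shifted_rowlens_eq)
  moreover have "cells_of (l @ [0]) = cells_of l" for l
    by (auto simp: cells_of_def nth_append less_Suc_eq split: if_splits)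
  ultimately show ?thesis by (simp add: num_tableaux_eq_card_fillings)
qed

lemma num_tableaux_west_Cons: "num_tableaux (False # v) = num_tableaux (True # v)"
proof -
  let ?c = "ncols v"
  let ?A = "map Suc [0..<?c]"
  let ?B = "ferrers_rowlens v"
  have "\<forall>x\<in>set (?A @ ?c # ?B). x \<le> ?c" using ferrers_rowlens_le_ncols[of _ v] by auto
  then have ncol: "(i, ?c) \<notin> cells_of (?A @ ?c # ?B)" for i
    by (rule column_notin_cells_of)
  have rowR: "(?c, j) \<in> cells_of (?A @ ?c # ?B) \<Longrightarrow> j < ?c" for j
    using cells_of_def[of "?A @ ?c # ?B"] by (simp add: nth_append)
  have "card {Q. is_filling (cells_of (?A @ Suc ?c # ?B)) {..<Suc ?c} {..<Suc ?c} Q} =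
      card {Q. is_filling (cells_of (?A @ ?c # ?B)) {..<?c} {..<?c} Q}"
    using cells_of_Suc_row[of ?A ?c ?B] ncol rowR
    by (intro card_fillings_remove_diagonal_corner) simp_all
  then show ?thesis by (simp add: num_tableaux_eq_card_fillings shifted_rowlens_eq)
qed

text \<open>The key local relation: split by the cell in the corner between the south step and the
  west step.  If it contains 0 its row must be empty, and deleting that row gives the word
  u W v; if it contains 1, deleting it relaxes the column condition for its column, and
  fillings with that column empty are those of the word u S v (its diagonal row is empty too).\<close>

lemma num_tableaux_exchange:
  "num_tableaux (u @ True # False # v) =
    num_tableaux (u @ False # True # v) + num_tableaux (u @ False # v) + num_tableaux (u @ True # v)"
proof -
  define p where "p = ncols v"
  define d where "d = ncols u + p"
  define M' where "M' = map (\<lambda>x. x + Suc p) (ferrers_rowlens u) @ p # ferrers_rowlens v"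
  define M where "M = map (\<lambda>x. x + p) (ferrers_rowlens u) @ p # ferrers_rowlens v"
  define A where "A = map Suc [0..<Suc d] @ map (\<lambda>x. x + Suc p) (ferrers_rowlens u)"
  define K where "K = {..<Suc d}"
  let ?fillings = "\<lambda>L K D. card {Q. is_filling (cells_of L) K D Q}"
  have B: "\<forall>x\<in>set (ferrers_rowlens v). x \<le> p"
    unfolding p_def using ferrers_rowlens_le_ncols by blast
  have pK: "p \<in> K" and lenA: "K \<subseteq> {..<length A}"
    by (auto simp: K_def d_def A_def)
  have column_added: "column_added p M' M"
    using B by (auto simp: column_added_def M'_def M_def list_all2_map1 list_all2_map2
      list_all2_same intro!: list_all2_appendI)
  have "num_tableaux (u @ True # False # v) = ?fillings (A @ Suc p # ferrers_rowlens v) K K"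
    by (simp add: num_tableaux_eq_card_fillings shifted_rowlens_eq A_def K_def d_def p_def)
  also have "\<dots> = num_tableaux (u @ False # v) + ?fillings (A @ p # ferrers_rowlens v) (K - {p}) K"
    using card_fillings_Suc_row[OF B pK lenA lenA]
    by (simp add: num_tableaux_eq_card_fillings shifted_rowlens_eq A_def K_def d_def p_def)
  also have "?fillings (A @ p # ferrers_rowlens v) (K - {p}) K =
      num_tableaux (u @ False # True # v) +
      card {Q. is_filling (cells_of (map Suc [0..<Suc d] @ M')) (K - {p}) K Q \<and>
        (\<forall>i. (i, p) \<notin> Q)}"
    using card_fillings_relax_column[OF finite_cells_of pK]
    by (simp add: num_tableaux_eq_card_fillings shifted_rowlens_eq A_def K_def d_def p_def M'_def)
  also have "card {Q. is_filling (cells_of (map Suc [0..<Suc d] @ M')) (K - {p}) K Q \<and>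
      (\<forall>i. (i, p) \<notin> Q)} = num_tableaux (u @ True # v)"
    using card_fillings_delete_diagonal[OF _ column_added]
    by (simp add: num_tableaux_eq_card_fillings shifted_rowlens_eq K_def d_def p_def M_def)
  finally show ?thesis by simp
qed

section \<open>Summing over boundary words\<close>

definition words :: "nat \<Rightarrow> bool list set" where
  "words n = {w. length w = n}"

lemma words_0: "words 0 = {[]}"
  by (auto simp: words_def)

lemma words_Suc: "words (Suc n) = Cons True ` words n \<union> Cons False ` words n"
proof (intro set_eqI iffI)
  fix w assume "w \<in> words (Suc n)"
  then obtain b w' where "w = b # w'" "length w' = n" by (auto simp: words_def length_Suc_conv)
  then show "w \<in> Cons True ` words n \<union> Cons False ` words n"
    by (cases b) (auto simp: words_def)
qed (auto simp: words_def)

lemma finite_words: "finite (words n)"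
  by (induction n) (simp_all add: words_0 words_Suc)

lemma sum_words_Suc:
  "(\<Sum>w\<in>words (Suc n). f w) = (\<Sum>w\<in>words n. f (True # w) + f (False # w))"
proof -
  have disjoint: "Cons True ` words n \<inter> Cons False ` words n = {}" by auto
  have "(\<Sum>w\<in>words (Suc n). f w) =
      (\<Sum>w\<in>Cons True ` words n. f w) + (\<Sum>w\<in>Cons False ` words n. f w)"
    unfolding words_Suc by (rule sum.union_disjoint) (simp_all add: finite_words disjoint)
  then show ?thesis by (simp add: sum.reindex sum.distrib)
qed

lemma sum_words_add:
  "(\<Sum>w\<in>words (a + b). f w) = (\<Sum>u\<in>words a. \<Sum>v\<in>words b. f (u @ v))"
proof (induction a arbitrary: f)
  case 0
  then show ?case by (simp add: words_0)
next
  case (Suc a)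
  have "(\<Sum>w\<in>words (Suc a + b). f w) =
      (\<Sum>w\<in>words (a + b). f (True # w)) + (\<Sum>w\<in>words (a + b). f (False # w))"
    using sum_words_Suc[where n = "a + b" and f = f] by (simp add: sum.distrib)
  also have "\<dots> = (\<Sum>u\<in>words a. (\<Sum>v\<in>words b. f (True # u @ v)) +
      (\<Sum>v\<in>words b. f (False # u @ v)))"
    by (simp add: Suc.IH sum.distrib)
  also have "\<dots> = (\<Sum>u\<in>words (Suc a). \<Sum>v\<in>words b. f (u @ v))"
    using sum_words_Suc[where n = a and f = "\<lambda>u. \<Sum>v\<in>words b. f (u @ v)"] by simp
  finally show ?case .
qed

lemma sum_words_Suc_right:
  "(\<Sum>w\<in>words (Suc n). f w) = (\<Sum>w\<in>words n. f (w @ [True]) + f (w @ [False]))"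
proof -
  have "words (Suc 0) = {[True], [False]}"
    using words_Suc[of 0] by (auto simp: words_0)
  then show ?thesis using sum_words_add[where a = n and b = 1 and f = f] by simp
qed

definition total_tableaux :: "nat \<Rightarrow> nat" where
  "total_tableaux n = (\<Sum>w\<in>words n. num_tableaux w)"

definition factor_count :: "nat \<Rightarrow> nat \<Rightarrow> bool list \<Rightarrow> nat" where
  "factor_count a b xs = (\<Sum>u\<in>words a. \<Sum>v\<in>words b. num_tableaux (u @ xs @ v))"

lemma factor_count_Nil: "factor_count a b [] = total_tableaux (a + b)"
  by (simp add: factor_count_def total_tableaux_def sum_words_add)

lemma factor_count_Suc_left:
  "factor_count (Suc a) b xs = factor_count a b (True # xs) + factor_count a b (False # xs)"
  by (simp add: factor_count_def sum_words_Suc_right sum.distrib)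

lemma factor_count_Suc_right:
  "factor_count a (Suc b) xs = factor_count a b (xs @ [True]) + factor_count a b (xs @ [False])"
  by (simp add: factor_count_def sum_words_Suc sum.distrib)

lemma factor_count_south_last: "factor_count a 0 [True] = total_tableaux a"
  by (simp add: factor_count_def total_tableaux_def words_0 num_tableaux_append_south)

lemma factor_count_west_first: "factor_count 0 b [False] = factor_count 0 b [True]"
  by (simp add: factor_count_def words_0 num_tableaux_west_Cons)

lemma factor_count_exchange:
  "factor_count a b [True, False] =
    factor_count a b [False, True] + factor_count a b [False] + factor_count a b [True]"
  by (simp add: factor_count_def num_tableaux_exchange sum.distrib)

lemma factor_count_south_Suc_right:
  "factor_count a (Suc b) [True] = factor_count (Suc a) b [True] + total_tableaux (Suc (a + b))"
proof -
  have "factor_count a b [True] + factor_count a b [False] = total_tableaux (Suc (a + b))"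
    using factor_count_Suc_right[of a b "[]"] by (simp add: factor_count_Nil)
  then show ?thesis
    by (simp add: factor_count_Suc_right factor_count_Suc_left factor_count_exchange)
qed

lemma factor_count_south: "j \<le> m \<Longrightarrow> factor_count (m - j) j [True] = (j + 1) * total_tableaux m"
proof (induction j)
  case 0
  then show ?case by (simp add: factor_count_south_last)
next
  case (Suc j)
  then have "factor_count (m - Suc j) (Suc j) [True] =
      factor_count (m - j) j [True] + total_tableaux m"
    by (simp add: factor_count_south_Suc_right Suc_diff_Suc)
  then show ?case using Suc by simp
qed

lemma total_tableaux_Suc: "total_tableaux (Suc m) = 2 * (m + 1) * total_tableaux m"
proof -
  have "total_tableaux (Suc m) = factor_count 0 m [True] + factor_count 0 m [False]"
    using factor_count_Suc_right[of 0 m "[]"] by (simp add: factor_count_Nil)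
  also have "\<dots> = 2 * factor_count (m - m) m [True]"
    by (simp add: factor_count_west_first)
  also have "\<dots> = 2 * ((m + 1) * total_tableaux m)"
    by (simp only: factor_count_south[OF order_refl])
  finally show ?thesis by simp
qed

lemma total_tableaux_pos: "total_tableaux m > 0"
proof (induction m)
  case 0
  then show ?case by (simp add: total_tableaux_def words_0 num_tableaux_Nil)
qed (simp add: total_tableaux_Suc)

lemma typeB_tableaux_eq_Sigma:
  "typeB_tableaux n = Sigma (words n) (\<lambda>w. {Q. is_typeB_tableau w Q})"
  by (auto simp: typeB_tableaux_def words_def)

lemma finite_typeB_tableaux_of: "finite {Q. is_typeB_tableau w Q}"
  unfolding is_typeB_tableau_iff_is_filling by (rule finite_fillings[OF finite_cells_of])

lemma card_typeB_tableaux: "card (typeB_tableaux n) = total_tableaux n"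
  unfolding typeB_tableaux_eq_Sigma total_tableaux_def num_tableaux_def
  by (rule card_SigmaI) (simp_all add: finite_words finite_typeB_tableaux_of)

lemma card_typeB_tableaux_south:
  assumes "1 \<le> k" "k \<le> n"
  shows "card {T \<in> typeB_tableaux n. fst T ! (k - 1)} = factor_count (k - 1) (n - k) [True]"
proof -
  have "{T \<in> typeB_tableaux n. fst T ! (k - 1)} =
      Sigma {w \<in> words n. w ! (k - 1)} (\<lambda>w. {Q. is_typeB_tableau w Q})"
    by (auto simp: typeB_tableaux_def words_def)
  then have "card {T \<in> typeB_tableaux n. fst T ! (k - 1)} =
      (\<Sum>w\<in>{w \<in> words n. w ! (k - 1)}. num_tableaux w)"
    unfolding num_tableaux_def
    by (simp add: card_SigmaI finite_words finite_typeB_tableaux_of)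
  also have "\<dots> = (\<Sum>w\<in>words n. if w ! (k - 1) then num_tableaux w else 0)"
    by (rule sum.inter_filter[OF finite_words])
  also have "\<dots> = (\<Sum>u\<in>words (k - 1). \<Sum>v\<in>words (Suc (n - k)).
      if (u @ v) ! (k - 1) then num_tableaux (u @ v) else 0)"
    using assms sum_words_add[where a = "k - 1" and b = "Suc (n - k)"] by (simp add: Suc_diff_le)
  also have "\<dots> = (\<Sum>u\<in>words (k - 1). \<Sum>v\<in>words (Suc (n - k)).
      if v ! 0 then num_tableaux (u @ v) else 0)"
    by (intro sum.cong refl) (simp add: words_def nth_append)
  also have "\<dots> = factor_count (k - 1) (n - k) [True]"
    by (simp add: factor_count_def sum_words_Suc)
  finally show ?thesis .
qed

theorem mainTheorem3:
  fixes n k :: nat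
  assumes "1 \<le> k" and "k \<le> n"
  shows "prob_S n k = (1 / 2) * (1 - (real k - 1) / real n)"
proof -
  obtain m where n: "n = Suc m" using assms by (cases n) auto
  have "card {T \<in> typeB_tableaux n. fst T ! (k - 1)} = (n - k + 1) * total_tableaux m"
    using card_typeB_tableaux_south[OF assms] factor_count_south[of "n - k" m] assms
    by (simp add: n Suc_diff_le)
  moreover have "card (typeB_tableaux n) = 2 * n * total_tableaux m"
    by (simp add: card_typeB_tableaux n total_tableaux_Suc)
  ultimately have "prob_S n k =
      (real (n - k + 1) * real (total_tableaux m)) / (real (2 * n) * real (total_tableaux m))"
    unfolding prob_S_def by (simp only: of_nat_mult)
  also have "\<dots> = real (n - k + 1) / real (2 * n)"
    using total_tableaux_pos[of m] by simp
  finally show ?thesis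
    using assms by (simp add: of_nat_diff field_simps)
qed

end
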